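(* Let $n\ge 2$, let $0\le c_1<c_2<\cdots<c_n$ be real numbers, and define $f_C:SO(n)\to\mathbb{R}$ by $f_C(A)=\sum_{i=1}^n c_i a_{ii}$. Let $A=\operatorname{diag}(\epsilon_1,\dots,\epsilon_n)\in SO(n)$ with $\epsilon_i\in\{+1,-1\}$ be a critical point of $f_C$, and let $i_1<i_2<\cdots<i_m$ be the indices $i$ with $\epsilon_i=+1$. Then the Morse index of $A$ (the number of negative eigenvalues of the Hessian of $f_C$ at $A$) equals $(i_1-1)+(i_2-1)+\cdots+(i_m-1)$ (this is $0$ when $m=0$), and the critical value is $f_C(A)=2(c_{i_1}+\cdots+c_{i_m})-\sum_{i=1}^n c_i$.
   Context: $SO(n)=\{A\in M_n(\mathbb{R}) : AA^t=I_n,\ \det A=1\}$. The critical points of $f_C$ are exactly the diagonal matrices in $SO(n)$ with diagonal entries $\pm1$, and they are non-degenerate; the index of a non-degenerate critical point is the number of negative eigenvalues of the Hessian in any local chart (independent of the chart by Sylvester's law of inertia). *)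

theory Defs
  imports Complex_Main "Jordan_Normal_Form.Char_Poly"
begin

(* Matrices are Jordan_Normal_Form matrices, indices 0-based: entry (i,j) with i,j < n. *)

definition SO :: "nat \<Rightarrow> real mat set" where
  "SO n = {A \<in> carrier_mat n n. A * transpose_mat A = 1\<^sub>m n \<and> det A = 1}"

definition fC :: "nat \<Rightarrow> (nat \<Rightarrow> real) \<Rightarrow> real mat \<Rightarrow> real" where
  "fC n c A = (\<Sum>i<n. c i * A $$ (i,i))"

definition mexp :: "nat \<Rightarrow> real mat \<Rightarrow> real mat" where
  "mexp n X = mat n n (\<lambda>(i,j). \<Sum>k. (X ^\<^sub>m k) $$ (i,j) / fact k)"

(* enumeration of the coordinate pairs (i,j), i<j<n, of the Lie algebra so(n) *)
definition coord_pairs :: "nat \<Rightarrow> (nat \<times> nat) list" where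
  "coord_pairs n = concat (map (\<lambda>j. map (\<lambda>i. (i,j)) [0..<j]) [0..<n])"

definition dimSO :: "nat \<Rightarrow> nat" where
  "dimSO n = length (coord_pairs n)"

definition skew_of :: "nat \<Rightarrow> (nat \<Rightarrow> real) \<Rightarrow> real mat" where
  "skew_of n x = mat n n (\<lambda>(a,b). \<Sum>k<dimSO n.
      x k * (if (a,b) = coord_pairs n ! k then 1
             else if (b,a) = coord_pairs n ! k then -1 else 0))"

definition chart :: "nat \<Rightarrow> real mat \<Rightarrow> (nat \<Rightarrow> real) \<Rightarrow> real mat" where
  "chart n A x = A * mexp n (skew_of n x)"

definition partial :: "nat \<Rightarrow> ((nat \<Rightarrow> real) \<Rightarrow> real) \<Rightarrow> (nat \<Rightarrow> real) \<Rightarrow> real" where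
  "partial k h x = (SOME D. ((\<lambda>t. h (x(k := x k + t))) has_real_derivative D) (at 0))"

definition hessian :: "nat \<Rightarrow> ((nat \<Rightarrow> real) \<Rightarrow> real) \<Rightarrow> (nat \<Rightarrow> real) \<Rightarrow> real mat" where
  "hessian N h x = mat N N (\<lambda>(p,q). partial p (partial q h) x)"

definition num_neg_eigenvalues :: "real mat \<Rightarrow> nat" where
  "num_neg_eigenvalues M =
     (\<Sum>a\<in>{a. a < 0 \<and> poly (char_poly M) a = 0}. order a (char_poly M))"

definition morse_index :: "nat \<Rightarrow> (nat \<Rightarrow> real) \<Rightarrow> real mat \<Rightarrow> nat" where
  "morse_index n c A =
     num_neg_eigenvalues (hessian (dimSO n) (\<lambda>x. fC n c (chart n A x)) (\<lambda>_. 0))"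

end

theory Submission
  imports Defs
begin

text \<open>
  Since \<open>A\<close> is diagonal, \<open>f\<^sub>C(A exp X) = \<Sum>\<^sub>i w\<^sub>i (exp X)\<^sub>i\<^sub>i\<close> with \<open>w\<^sub>i = c\<^sub>i \<epsilon>\<^sub>i\<close>.
  Along the coordinate of a pair \<open>a < b\<close>, \<open>exp (t E\<^sub>a\<^sub>b)\<close> is the rotation by \<open>t\<close> in the
  \<open>(a,b)\<close>-plane, so \<open>f\<^sub>C\<close> restricted to this line is \<open>const + (w\<^sub>a + w\<^sub>b)(cos t - 1)\<close>
  and the diagonal Hessian entry is \<open>-(w\<^sub>a + w\<^sub>b)\<close>. Mixed partials vanish: changing the sign
  of a basis vector that lies in the second plane but not in the first conjugates
  \<open>t E\<^sub>a\<^sub>b + u E\<^sub>c\<^sub>d\<close> into \<open>t E\<^sub>a\<^sub>b - u E\<^sub>c\<^sub>d\<close> without changing the diagonal of the exponential,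
  so \<open>f\<^sub>C\<close> is even in \<open>u\<close>. The Hessian is therefore diagonal, and as \<open>|c\<^sub>a| < c\<^sub>b\<close>, the
  entry of \<open>a < b\<close> is negative exactly when \<open>\<epsilon>\<^sub>b = 1\<close>; each such \<open>b\<close> contributes \<open>b\<close> pairs
  (0-based indices).
\<close>

lemma index_mult_mat_sum:
  assumes "A \<in> carrier_mat m n" "B \<in> carrier_mat n p" "i < m" "j < p"
  shows "(A * B) $$ (i,j) = (\<Sum>l<n. A $$ (i,l) * B $$ (l,j))"
  using assms by (simp add: scalar_prod_def lessThan_atLeast0)

lemma index_pow_mat_Suc:
  assumes "X \<in> carrier_mat n n" "i < n" "j < n"
  shows "(X ^\<^sub>m Suc k) $$ (i,j) = (\<Sum>l<n. (X ^\<^sub>m k) $$ (i,l) * X $$ (l,j))"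
  using assms by (simp only: pow_mat.simps(2)) (rule index_mult_mat_sum, auto)

lemma pow_smult_mat:
  fixes A :: "'a :: comm_ring_1 mat"
  assumes "A \<in> carrier_mat n n"
  shows "(t \<cdot>\<^sub>m A) ^\<^sub>m k = t ^ k \<cdot>\<^sub>m A ^\<^sub>m k"
proof (induction k)
  case 0
  show ?case using assms by (intro eq_matI) auto
next
  case (Suc k)
  have "(t \<cdot>\<^sub>m A) ^\<^sub>m Suc k = (t ^ k \<cdot>\<^sub>m A ^\<^sub>m k) * (t \<cdot>\<^sub>m A)"
    using Suc by simp
  also have "\<dots> = t ^ Suc k \<cdot>\<^sub>m A ^\<^sub>m Suc k"
    using assms by (intro eq_matI) (auto simp: scalar_prod_def sum_distrib_left mult_ac)
  finally show ?case .
qed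

lemma dim_mat_diag [simp]: "dim_row (mat_diag n f) = n" "dim_col (mat_diag n f) = n"
  by (simp_all add: mat_diag_def)

lemma pow_mat_diag_conj:
  fixes X :: "'a :: comm_ring_1 mat"
  assumes "X \<in> carrier_mat n n" and "\<And>i. \<sigma> i * \<sigma> i = 1"
  shows "(mat_diag n \<sigma> * X * mat_diag n \<sigma>) ^\<^sub>m k = mat_diag n \<sigma> * X ^\<^sub>m k * mat_diag n \<sigma>"
proof -
  have "mat_diag n \<sigma> * mat_diag n \<sigma> = 1\<^sub>m n"
    using assms(2) by simp
  then have "similar_mat_wit (mat_diag n \<sigma> * X * mat_diag n \<sigma>) X (mat_diag n \<sigma>) (mat_diag n \<sigma>)"
    using assms(1) mult_carrier_mat[OF mult_carrier_mat[OF mat_diag_dim assms(1)] mat_diag_dim]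
    by (intro similar_mat_witI[of _ _ n]) auto
  then show ?thesis
    by (rule similar_mat_wit_pow_id)
qed

lemma index_mat_diag_conj:
  assumes "X \<in> carrier_mat n n" "i < n" "j < n"
  shows "(mat_diag n \<sigma> * X * mat_diag n \<sigma>) $$ (i,j) = \<sigma> i * X $$ (i,j) * \<sigma> j"
  using assms by (simp add: mat_diag_mult_left[of _ n n] mat_diag_mult_right[of _ n n])

section \<open>Coordinates on \<open>so(n)\<close>\<close>

definition rot_gen :: "nat \<Rightarrow> nat \<times> nat \<Rightarrow> real mat" where
  "rot_gen n ab = mat n n (\<lambda>(i,j). if (i,j) = ab then 1 else if (j,i) = ab then -1 else 0)"

lemma rot_gen_carrier [simp]:
  "rot_gen n ab \<in> carrier_mat n n" "dim_row (rot_gen n ab) = n" "dim_col (rot_gen n ab) = n"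
  by (simp_all add: rot_gen_def)

lemma set_coord_pairs: "set (coord_pairs n) = {(i,j). i < j \<and> j < n}"
  unfolding coord_pairs_def by auto

lemma coord_pairs_Suc: "coord_pairs (Suc n) = coord_pairs n @ map (\<lambda>i. (i,n)) [0..<n]"
  by (simp add: coord_pairs_def)

lemma distinct_coord_pairs: "distinct (coord_pairs n)"
  by (induction n)
    (auto simp: coord_pairs_Suc distinct_map inj_on_def set_coord_pairs coord_pairs_def)

lemma coord_pairs_nth:
  assumes "p < dimSO n" "coord_pairs n ! p = (a,b)"
  shows "a < b" "b < n"
  using nth_mem[of p "coord_pairs n"] assms by (auto simp: dimSO_def set_coord_pairs)

lemma length_filter_coord_pairs:
  "length (filter P (coord_pairs n)) = (\<Sum>j<n. length (filter (\<lambda>i. P (i,j)) [0..<j]))"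
  by (induction n) (auto simp: coord_pairs_Suc o_def coord_pairs_def)

lemma index_skew_of:
  assumes "i < n" "j < n"
  shows "skew_of n x $$ (i,j) = (\<Sum>k<dimSO n. x k * rot_gen n (coord_pairs n ! k) $$ (i,j))"
  using assms by (simp add: skew_of_def rot_gen_def)

lemma skew_of_carrier [simp]:
  "skew_of n x \<in> carrier_mat n n" "dim_row (skew_of n x) = n" "dim_col (skew_of n x) = n"
  by (simp_all add: skew_of_def)

lemma skew_of_add: "skew_of n (\<lambda>k. x k + y k) = skew_of n x + skew_of n y"
  by (rule eq_matI) (simp_all add: index_skew_of sum.distrib distrib_right)

lemma skew_of_single_coord:
  assumes "p < dimSO n"
  shows "skew_of n ((\<lambda>_. 0)(p := t)) = t \<cdot>\<^sub>m rot_gen n (coord_pairs n ! p)" (is "?S = ?R")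
proof (rule eq_matI)
  fix i j assume "i < dim_row ?R" "j < dim_col ?R"
  then show "?S $$ (i,j) = ?R $$ (i,j)"
    using assms by (simp add: index_skew_of if_distrib[of "\<lambda>x. x * _"] cong: if_cong)
qed simp_all

section \<open>Differentiability of the exponential along lines\<close>

fun pow_line_deriv :: "real mat \<Rightarrow> real mat \<Rightarrow> real \<Rightarrow> nat \<Rightarrow> real mat" where
  "pow_line_deriv M N u 0 = 0\<^sub>m (dim_row M) (dim_row M)"
| "pow_line_deriv M N u (Suc k) = pow_line_deriv M N u k * (M + u \<cdot>\<^sub>m N) + (M + u \<cdot>\<^sub>m N) ^\<^sub>m k * N"

lemma pow_line_deriv_carrier:
  assumes "M \<in> carrier_mat n n" "N \<in> carrier_mat n n"
  shows "pow_line_deriv M N u k \<in> carrier_mat n n"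
  using assms by (induction k) auto

lemma index_pow_line_deriv_Suc:
  assumes M: "M \<in> carrier_mat n n" and N: "N \<in> carrier_mat n n" and ij: "i < n" "j < n"
  shows "pow_line_deriv M N u (Suc k) $$ (i,j) =
    (\<Sum>l<n. pow_line_deriv M N u k $$ (i,l) * (M + u \<cdot>\<^sub>m N) $$ (l,j))
    + (\<Sum>l<n. ((M + u \<cdot>\<^sub>m N) ^\<^sub>m k) $$ (i,l) * N $$ (l,j))"
proof -
  have X: "M + u \<cdot>\<^sub>m N \<in> carrier_mat n n" using M N by simp
  note D = pow_line_deriv_carrier[OF M N, of u k]
  show ?thesis
    using ij D X N
    by (simp add: index_mult_mat_sum[OF D X ij] index_mult_mat_sum[OF pow_carrier_mat[OF X] N ij])
qed

lemma index_pow_line_has_derivative: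
  assumes M: "M \<in> carrier_mat n n" and N: "N \<in> carrier_mat n n" and "i < n" "j < n"
  shows "((\<lambda>u. ((M + u \<cdot>\<^sub>m N) ^\<^sub>m k) $$ (i,j))
    has_real_derivative pow_line_deriv M N u k $$ (i,j)) (at u)"
  using assms(3,4)
proof (induction k arbitrary: i j)
  case 0
  then show ?case using M N by simp
next
  case (Suc k)
  have X: "(M + v \<cdot>\<^sub>m N) $$ (l,j) = M $$ (l,j) + v * N $$ (l,j)" if "l < n" for v l
    using that Suc.prems M N by simp
  have "((\<lambda>u. \<Sum>l<n. ((M + u \<cdot>\<^sub>m N) ^\<^sub>m k) $$ (i,l) * (M $$ (l,j) + u * N $$ (l,j)))
      has_real_derivative
      (\<Sum>l<n. pow_line_deriv M N u k $$ (i,l) * (M $$ (l,j) + u * N $$ (l,j))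
             + ((M + u \<cdot>\<^sub>m N) ^\<^sub>m k) $$ (i,l) * N $$ (l,j))) (at u)"
    using Suc by (auto intro!: DERIV_sum derivative_eq_intros)
  moreover have "((M + v \<cdot>\<^sub>m N) ^\<^sub>m Suc k) $$ (i,j)
      = (\<Sum>l<n. ((M + v \<cdot>\<^sub>m N) ^\<^sub>m k) $$ (i,l) * (M $$ (l,j) + v * N $$ (l,j)))" for v
    using Suc.prems M N
    by (subst index_pow_mat_Suc[of _ n]) (auto intro!: sum.cong simp: X)
  ultimately show ?case
    unfolding index_pow_line_deriv_Suc[OF M N Suc.prems]
    using Suc.prems by (simp add: X sum.distrib)
qed

lemma abs_sum_mult_le:
  fixes f g :: "nat \<Rightarrow> real"
  assumes "\<And>l. l < n \<Longrightarrow> \<bar>f l\<bar> \<le> A" "\<And>l. l < n \<Longrightarrow> \<bar>g l\<bar> \<le> B" "0 \<le> B"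
  shows "\<bar>\<Sum>l<n. f l * g l\<bar> \<le> real n * (A * B)"
proof -
  have "\<bar>\<Sum>l<n. f l * g l\<bar> \<le> (\<Sum>l<n. \<bar>f l\<bar> * \<bar>g l\<bar>)"
    using sum_abs[of "\<lambda>l. f l * g l" "{..<n}"] by (simp add: abs_mult)
  also have "\<dots> \<le> (\<Sum>l<n. A * B)"
  proof (rule sum_mono)
    fix l assume "l \<in> {..<n}"
    then have "\<bar>f l\<bar> \<le> A" "\<bar>g l\<bar> \<le> B" using assms by auto
    then show "\<bar>f l\<bar> * \<bar>g l\<bar> \<le> A * B"
      using abs_ge_zero[of "f l"] abs_ge_zero[of "g l"] by (intro mult_mono) linarith+
  qed
  finally show ?thesis by simp
qed

lemma abs_index_pow_mat_le:
  fixes Y :: "real mat"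
  assumes Y: "Y \<in> carrier_mat n n" and K: "0 \<le> K"
    and bound: "\<And>a b. a < n \<Longrightarrow> b < n \<Longrightarrow> \<bar>Y $$ (a,b)\<bar> \<le> K"
    and "i < n" "j < n"
  shows "\<bar>(Y ^\<^sub>m k) $$ (i,j)\<bar> \<le> (real n * K) ^ k"
  using assms(4,5)
proof (induction k arbitrary: i j)
  case 0
  then show ?case using Y by simp
next
  case (Suc k)
  have "\<bar>(Y ^\<^sub>m Suc k) $$ (i,j)\<bar> \<le> real n * ((real n * K) ^ k * K)"
    unfolding index_pow_mat_Suc[OF Y Suc.prems] using Suc bound K by (intro abs_sum_mult_le) auto
  then show ?case by (simp add: mult_ac)
qed

lemma abs_index_pow_line_deriv_le:
  assumes M: "M \<in> carrier_mat n n" and N: "N \<in> carrier_mat n n" and K: "0 \<le> K" "1 \<le> real n * K"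
    and bX: "\<And>a b. a < n \<Longrightarrow> b < n \<Longrightarrow> \<bar>(M + u \<cdot>\<^sub>m N) $$ (a,b)\<bar> \<le> K"
    and bN: "\<And>a b. a < n \<Longrightarrow> b < n \<Longrightarrow> \<bar>N $$ (a,b)\<bar> \<le> K"
    and "i < n" "j < n"
  shows "\<bar>pow_line_deriv M N u k $$ (i,j)\<bar> \<le> real k * (real n * K) ^ k"
  using assms(7,8)
proof (induction k arbitrary: i j)
  case 0
  then show ?case using M by simp
next
  case (Suc k)
  define B where "B = real n * K"
  have X: "M + u \<cdot>\<^sub>m N \<in> carrier_mat n n" using M N by simp
  have D: "\<bar>\<Sum>l<n. pow_line_deriv M N u k $$ (i,l) * (M + u \<cdot>\<^sub>m N) $$ (l,j)\<bar>
      \<le> real n * ((real k * B ^ k) * K)"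
    using Suc.IH Suc.prems bX K by (intro abs_sum_mult_le) (auto simp: B_def)
  have P: "\<bar>\<Sum>l<n. ((M + u \<cdot>\<^sub>m N) ^\<^sub>m k) $$ (i,l) * N $$ (l,j)\<bar> \<le> real n * (B ^ k * K)"
    using abs_index_pow_mat_le[OF X K(1) bX] Suc.prems bN K
    by (intro abs_sum_mult_le) (auto simp: B_def)
  have "\<bar>pow_line_deriv M N u (Suc k) $$ (i,j)\<bar>
      \<le> real n * ((real k * B ^ k) * K) + real n * (B ^ k * K)"
    unfolding index_pow_line_deriv_Suc[OF M N Suc.prems]
    using D P abs_triangle_ineq by (rule add_mono[THEN order_trans[rotated]])
  also have "\<dots> = real k * B ^ Suc k + B ^ k * B"
    by (simp add: B_def algebra_simps)
  also have "\<dots> \<le> real (Suc k) * B ^ Suc k"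
    by (simp add: algebra_simps)
  finally show ?case unfolding B_def .
qed

lemma DERIV_suminf_dominated:
  fixes f f' :: "real \<Rightarrow> nat \<Rightarrow> real"
  assumes der: "\<And>x k. x \<in> {a<..<b} \<Longrightarrow> ((\<lambda>x. f x k) has_real_derivative f' x k) (at x)"
    and bound: "\<And>x k. x \<in> {a<..<b} \<Longrightarrow> \<bar>f' x k\<bar> \<le> L k" and L: "summable L"
    and x0: "x0 \<in> {a<..<b}" and "summable (f x0)"
  shows "((\<lambda>x. \<Sum>k. f x k) has_real_derivative (\<Sum>k. f' x0 k)) (at x0)"
proof -
  have mvt: "\<bar>f v k - f u k\<bar> \<le> L k * (v - u)" if uv: "u \<in> {a<..<b}" "v \<in> {a<..<b}" "u < v" for u v k
  proof -
    have "((\<lambda>x. f x k) has_real_derivative f' x k) (at x)" if "u \<le> x" "x \<le> v" for x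
      using der uv that by auto
    then obtain z where z: "u < z" "z < v" "f v k - f u k = (v - u) * f' z k"
      using MVT2[OF \<open>u < v\<close>, of "\<lambda>x. f x k" "\<lambda>x. f' x k"] by blast
    then have "\<bar>f' z k\<bar> \<le> L k" using uv by (intro bound) auto
    then show ?thesis using z \<open>u < v\<close> by (simp add: abs_mult mult.commute mult_left_mono)
  qed
  have lip: "\<bar>f x k - f y k\<bar> \<le> L k * \<bar>x - y\<bar>" if "x \<in> {a<..<b}" "y \<in> {a<..<b}" for x y k
    using mvt[OF that] mvt[OF that(2,1)] L summable_def
    by (cases x y rule: linorder_cases) (auto simp: abs_minus_commute)
  have "summable (f x)" if "x \<in> {a<..<b}" for x
  proof -
    have "summable (\<lambda>k. f x k - f x0 k)"
      by (rule summable_comparison_test'[OF summable_mult2[OF L, of "\<bar>x - x0\<bar>"], of 0])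
        (use lip that x0 in auto)
    from summable_add[OF this \<open>summable (f x0)\<close>] show ?thesis by simp
  qed
  moreover have "summable (f' x0)"
    by (rule summable_comparison_test'[OF L, of 0]) (use bound x0 in auto)
  ultimately show ?thesis
    using der x0 lip L by (intro DERIV_series'[where L = L]) auto
qed

lemma summable_power_div_fact: "summable (\<lambda>k. x ^ k / fact k :: real)"
  using summable_exp[of x] by (simp add: divide_inverse mult.commute)

lemma ex_bound_lessThan_square:
  fixes f :: "nat \<Rightarrow> nat \<Rightarrow> real"
  shows "\<exists>K \<ge> 1. \<forall>a<n. \<forall>b<n. f a b \<le> K"
proof -
  have "bdd_above ((\<lambda>(a,b). f a b) ` ({..<n} \<times> {..<n}))"
    by (intro bdd_above_finite) simp
  then obtain K where "\<And>a b. a < n \<Longrightarrow> b < n \<Longrightarrow> f a b \<le> K"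
    unfolding bdd_above_def by fastforce
  then show ?thesis
    by (intro exI[of _ "max 1 K"]) (auto intro: le_max_iff_disj[THEN iffD2])
qed

lemma line_entries_bounded:
  fixes M N :: "real mat"
  assumes M: "M \<in> carrier_mat n n" and N: "N \<in> carrier_mat n n"
  obtains K where "1 \<le> K" and "\<And>a b. a < n \<Longrightarrow> b < n \<Longrightarrow> \<bar>N $$ (a,b)\<bar> \<le> K"
    and "\<And>x a b. \<bar>x\<bar> \<le> 1 \<Longrightarrow> a < n \<Longrightarrow> b < n \<Longrightarrow> \<bar>(M + x \<cdot>\<^sub>m N) $$ (a,b)\<bar> \<le> K"
proof -
  obtain K where "1 \<le> K" and K: "\<And>a b. a < n \<Longrightarrow> b < n \<Longrightarrow> \<bar>M $$ (a,b)\<bar> + \<bar>N $$ (a,b)\<bar> \<le> K"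
    using ex_bound_lessThan_square[of n "\<lambda>a b. \<bar>M $$ (a,b)\<bar> + \<bar>N $$ (a,b)\<bar>"] by blast
  moreover have "\<bar>(M + x \<cdot>\<^sub>m N) $$ (a,b)\<bar> \<le> K" if "\<bar>x\<bar> \<le> 1" "a < n" "b < n" for x a b
  proof -
    have "\<bar>(M + x \<cdot>\<^sub>m N) $$ (a,b)\<bar> \<le> \<bar>M $$ (a,b)\<bar> + \<bar>x\<bar> * \<bar>N $$ (a,b)\<bar>"
      using that M N by (simp add: abs_triangle_ineq[THEN order_trans] abs_mult)
    also have "\<dots> \<le> \<bar>M $$ (a,b)\<bar> + \<bar>N $$ (a,b)\<bar>"
      using that mult_left_le_one_le[of "\<bar>N $$ (a,b)\<bar>" "\<bar>x\<bar>"] by simp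
    finally show ?thesis using K[OF that(2,3)] by simp
  qed
  moreover have "\<bar>N $$ (a,b)\<bar> \<le> K" if "a < n" "b < n" for a b
    using K[OF that] by auto
  ultimately show ?thesis
    using that by blast
qed

lemma mexp_line_differentiable:
  assumes M: "M \<in> carrier_mat n n" and N: "N \<in> carrier_mat n n" and ij: "i < n" "j < n"
  shows "(\<lambda>u. mexp n (M + u \<cdot>\<^sub>m N) $$ (i,j)) differentiable (at 0)"
proof -
  obtain K where "1 \<le> K" and bN: "\<And>a b. a < n \<Longrightarrow> b < n \<Longrightarrow> \<bar>N $$ (a,b)\<bar> \<le> K"
    and bX: "\<And>x a b. \<bar>x\<bar> \<le> 1 \<Longrightarrow> a < n \<Longrightarrow> b < n \<Longrightarrow> \<bar>(M + x \<cdot>\<^sub>m N) $$ (a,b)\<bar> \<le> K"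
    using line_entries_bounded[OF M N] by blast
  define B where "B = real n * K"
  have "1 \<le> B"
    using \<open>1 \<le> K\<close> ij mult_mono[of 1 "real n" 1 K] unfolding B_def by simp
  define f where "f x k = ((M + x \<cdot>\<^sub>m N) ^\<^sub>m k) $$ (i,j) / fact k" for x k
  define f' where "f' x k = pow_line_deriv M N x k $$ (i,j) / fact k" for x k
  have "((\<lambda>x. \<Sum>k. f x k) has_real_derivative (\<Sum>k. f' 0 k)) (at 0)"
  proof (rule DERIV_suminf_dominated
      [where L = "\<lambda>k. B * ((2 * B) ^ k / fact k)" and a = "-1" and b = 1])
    show "((\<lambda>x. f x k) has_real_derivative f' x k) (at x)" for x k
      unfolding f_def f'_def by (intro DERIV_cdivide index_pow_line_has_derivative[OF M N ij])
    show "\<bar>f' x k\<bar> \<le> B * ((2 * B) ^ k / fact k)" if "x \<in> {-1<..<1}" for x k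
    proof -
      have "\<bar>pow_line_deriv M N x k $$ (i,j)\<bar> \<le> real k * B ^ k"
        unfolding B_def using \<open>1 \<le> K\<close> \<open>1 \<le> B\<close> bX that bN ij
        by (intro abs_index_pow_line_deriv_le[OF M N]) (auto simp: B_def)
      also have "\<dots> \<le> 2 ^ k * B ^ k"
        using less_exp[of k] \<open>1 \<le> B\<close> by (intro mult_right_mono) (simp_all add: less_imp_le)
      also have "\<dots> \<le> B * (2 * B) ^ k"
        using \<open>1 \<le> B\<close> by (simp add: power_mult_distrib)
      finally show ?thesis
        unfolding f'_def by (simp add: divide_right_mono)
    qed
    show "summable (\<lambda>k. B * ((2 * B) ^ k / fact k))"
      by (intro summable_mult summable_power_div_fact)
    have "\<bar>f 0 k\<bar> \<le> B ^ k / fact k" for k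
      using abs_index_pow_mat_le[of "M + 0 \<cdot>\<^sub>m N" n K, OF _ _ bX] \<open>1 \<le> K\<close> M N ij
      unfolding f_def B_def by (simp add: divide_right_mono)
    then show "summable (f 0)"
      by (intro summable_comparison_test'[OF summable_power_div_fact[of B], of 0]) simp
  qed simp
  moreover have "mexp n (M + u \<cdot>\<^sub>m N) $$ (i,j) = (\<Sum>k. f u k)" for u
    unfolding f_def mexp_def using ij M N by simp
  ultimately show ?thesis
    unfolding real_differentiable_def by auto
qed

section \<open>Exponentials of plane rotations\<close>

lemma index_mult_rot_gen:
  assumes "A \<in> carrier_mat n n" "a \<noteq> b" "a < n" "b < n" "i < n" "j < n"
  shows "(A * rot_gen n (a,b)) $$ (i,j) =
    (if j = b then A $$ (i,a) else 0) - (if j = a then A $$ (i,b) else 0)"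
proof -
  have "(A * rot_gen n (a,b)) $$ (i,j) = (\<Sum>l<n. A $$ (i,l) * rot_gen n (a,b) $$ (l,j))"
    using assms by (intro index_mult_mat_sum) auto
  also have "\<dots> = (\<Sum>l<n. (if l = a then (if j = b then A $$ (i,l) else 0) else 0)
                         - (if l = b then (if j = a then A $$ (i,l) else 0) else 0))"
    using assms by (intro sum.cong) (auto simp: rot_gen_def)
  also have "\<dots> = (if j = b then A $$ (i,a) else 0) - (if j = a then A $$ (i,b) else 0)"
    using assms by (simp add: sum_subtractf)
  finally show ?thesis .
qed

lemma fact_mult_cos_coeff_Suc: "fact (Suc k) * cos_coeff (Suc k) = - (fact k * sin_coeff k)"
  by (simp add: cos_coeff_Suc del: of_nat_Suc)

lemma fact_mult_sin_coeff_Suc: "fact (Suc k) * sin_coeff (Suc k) = fact k * cos_coeff k"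
  by (simp add: sin_coeff_Suc del: of_nat_Suc)

lemma index_rot_gen_pow:
  assumes ab: "a \<noteq> b" "a < n" "b < n" and "i < n" "j < n"
  shows "(rot_gen n (a,b) ^\<^sub>m k) $$ (i,j) =
    (if i = j then (if i = a \<or> i = b then fact k * cos_coeff k else of_bool (k = 0))
     else if (i,j) = (a,b) then fact k * sin_coeff k
     else if (i,j) = (b,a) then - (fact k * sin_coeff k) else 0)"
  using assms(4,5)
proof (induction k arbitrary: i j)
  case 0
  then show ?case by (simp add: cos_coeff_def sin_coeff_def)
next
  case (Suc k)
  have "(rot_gen n (a,b) ^\<^sub>m Suc k) $$ (i,j) = (rot_gen n (a,b) ^\<^sub>m k * rot_gen n (a,b)) $$ (i,j)"
    by simp
  also have "\<dots> = (if j = b then (rot_gen n (a,b) ^\<^sub>m k) $$ (i,a) else 0)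
                 - (if j = a then (rot_gen n (a,b) ^\<^sub>m k) $$ (i,b) else 0)"
    using ab Suc.prems by (intro index_mult_rot_gen) auto
  finally show ?case
    using Suc.IH ab Suc.prems
    by (auto simp: fact_mult_cos_coeff_Suc fact_mult_sin_coeff_Suc simp del: fact_Suc)
qed

lemma mexp_rot_gen_diag:
  assumes "a \<noteq> b" "a < n" "b < n" "i < n"
  shows "mexp n (t \<cdot>\<^sub>m rot_gen n (a,b)) $$ (i,i) = (if i = a \<or> i = b then cos t else 1)"
proof -
  have "mexp n (t \<cdot>\<^sub>m rot_gen n (a,b)) $$ (i,i)
      = (\<Sum>k. t ^ k * (rot_gen n (a,b) ^\<^sub>m k) $$ (i,i) / fact k)"
    using assms by (simp add: mexp_def pow_smult_mat[OF rot_gen_carrier(1)])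
  also have "\<dots> = (if i = a \<or> i = b then cos t else 1)"
  proof (cases "i = a \<or> i = b")
    case True
    then have "(\<lambda>k. t ^ k * (rot_gen n (a,b) ^\<^sub>m k) $$ (i,i) / fact k)
        = (\<lambda>k. cos_coeff k *\<^sub>R t ^ k)"
      using assms by (simp add: index_rot_gen_pow mult.commute)
    then show ?thesis
      using True cos_converges[of t] by (simp add: sums_iff)
  next
    case False
    then have "(\<lambda>k. t ^ k * (rot_gen n (a,b) ^\<^sub>m k) $$ (i,i) / fact k)
        = (\<lambda>k. if k = 0 then 1 else 0)"
      using assms by (auto simp: index_rot_gen_pow)
    then show ?thesis
      using False sums_single[of 0 "\<lambda>_. 1 :: real"] by (simp add: sums_iff)
  qed
  finally show ?thesis .
qed

lemma mexp_mat_diag_conj_diag: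
  assumes X: "X \<in> carrier_mat n n" and \<sigma>: "\<And>i. \<sigma> i * \<sigma> i = 1" and i: "i < n"
  shows "mexp n (mat_diag n \<sigma> * X * mat_diag n \<sigma>) $$ (i,i) = mexp n X $$ (i,i)"
proof -
  have "((mat_diag n \<sigma> * X * mat_diag n \<sigma>) ^\<^sub>m k) $$ (i,i) = (\<sigma> i * \<sigma> i) * (X ^\<^sub>m k) $$ (i,i)" for k
    unfolding pow_mat_diag_conj[OF X \<sigma>] index_mat_diag_conj[OF pow_carrier_mat[OF X] i i]
    by (simp add: mult_ac)
  then show ?thesis
    using X i by (simp add: mexp_def \<sigma>)
qed

section \<open>The Hessian in the exponential chart\<close>

lemma fC_mat_diag_mult:
  assumes "E \<in> carrier_mat n n"
  shows "fC n c (mat_diag n \<epsilon> * E) = fC n (\<lambda>i. c i * \<epsilon> i) E"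
  unfolding fC_def using assms by (simp add: mat_diag_mult_left mult.assoc)

lemma fC_mexp_line_differentiable:
  assumes "M \<in> carrier_mat n n" "N \<in> carrier_mat n n"
  shows "(\<lambda>u. fC n w (mexp n (M + u \<cdot>\<^sub>m N))) differentiable (at 0)"
  unfolding fC_def using assms
  by (auto intro!: differentiable_sum differentiable_mult mexp_line_differentiable)

lemma partial_eqI:
  assumes "((\<lambda>t. h (x(k := x k + t))) has_real_derivative D) (at 0)"
  shows "partial k h x = D"
  unfolding partial_def using assms by (rule some_equality) (rule DERIV_unique[OF _ assms])

lemma has_real_derivative_even_eq_0:
  assumes "(\<phi> has_real_derivative D) (at 0)" "\<And>u. \<phi> (- u) = \<phi> u"
  shows "D = 0"
proof -
  have "((\<lambda>u. \<phi> (- u)) has_real_derivative - D) (at 0)"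
    using DERIV_mirror[where f = \<phi> and x = 0 and y = D] assms(1) by simp
  then have "(\<phi> has_real_derivative - D) (at 0)"
    using assms(2) by simp
  with assms(1) have "D = - D"
    by (rule DERIV_unique)
  then show ?thesis by simp
qed

lemma fC_mexp_skew_single_coord:
  assumes "p < dimSO n" "coord_pairs n ! p = (a,b)"
  shows "fC n w (mexp n (skew_of n ((\<lambda>_. 0)(p := t)))) = (\<Sum>i<n. w i) + (w a + w b) * (cos t - 1)"
proof -
  have ab: "a < b" "b < n"
    using coord_pairs_nth[OF assms] by auto
  have "fC n w (mexp n (skew_of n ((\<lambda>_. 0)(p := t))))
      = (\<Sum>i<n. w i * (if i = a \<or> i = b then cos t else 1))"
    unfolding fC_def skew_of_single_coord[OF assms(1)] assms(2)
    using ab by (intro sum.cong refl) (simp add: mexp_rot_gen_diag)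
  also have "\<dots> = (\<Sum>i<n. w i + ((if i = a then w a * (cos t - 1) else 0)
                                 + (if i = b then w b * (cos t - 1) else 0)))"
    using ab by (intro sum.cong refl) (auto simp: algebra_simps)
  also have "\<dots> = (\<Sum>i<n. w i) + (w a + w b) * (cos t - 1)"
    using ab by (simp add: sum.distrib algebra_simps)
  finally show ?thesis .
qed

lemma hessian_diag_fC_mexp_skew:
  assumes "p < dimSO n" "coord_pairs n ! p = (a,b)"
  shows "partial p (partial p (\<lambda>x. fC n w (mexp n (skew_of n x)))) (\<lambda>_. 0) = - (w a + w b)"
proof -
  have first: "partial p (\<lambda>x. fC n w (mexp n (skew_of n x))) ((\<lambda>_. 0)(p := t))
      = - (w a + w b) * sin t" for t
  proof (rule partial_eqI)
    have "((\<lambda>u. (\<Sum>i<n. w i) + (w a + w b) * (cos (t + u) - 1))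
        has_real_derivative - (w a + w b) * sin t) (at 0)"
      by (auto intro!: derivative_eq_intros simp: algebra_simps)
    then show "((\<lambda>u. fC n w (mexp n (skew_of n (((\<lambda>_. 0)(p := t))(p := ((\<lambda>_. 0)(p := t)) p + u)))))
        has_real_derivative - (w a + w b) * sin t) (at 0)"
      by (simp add: fC_mexp_skew_single_coord[OF assms])
  qed
  have "((\<lambda>u. - (w a + w b) * sin u) has_real_derivative - (w a + w b)) (at 0)"
    by (auto intro!: derivative_eq_intros)
  then show ?thesis
    by (intro partial_eqI) (simp add: first)
qed

lemma partial_eq_0_if_even:
  assumes "(\<lambda>u. h (x(k := x k + u))) differentiable (at 0)"
    and "\<And>u. h (x(k := x k + - u)) = h (x(k := x k + u))"
  shows "partial k h x = 0"
proof -
  obtain D where D: "((\<lambda>u. h (x(k := x k + u))) has_real_derivative D) (at 0)"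
    using assms(1) unfolding real_differentiable_def by blast
  moreover have "D = 0"
    using D assms(2) by (rule has_real_derivative_even_eq_0)
  ultimately show ?thesis
    by (intro partial_eqI) simp
qed

lemma skew_of_two_coords:
  assumes "p < dimSO n" "q < dimSO n" "p \<noteq> q"
  shows "skew_of n (((\<lambda>_. 0)(p := t))(q := u))
    = t \<cdot>\<^sub>m rot_gen n (coord_pairs n ! p) + u \<cdot>\<^sub>m rot_gen n (coord_pairs n ! q)"
proof -
  have "((\<lambda>_. 0)(p := t))(q := u) = (\<lambda>k. ((\<lambda>_. 0)(p := t)) k + ((\<lambda>_. 0)(q := u)) k)"
    using assms(3) by auto
  then show ?thesis
    by (simp only: skew_of_add skew_of_single_coord assms(1,2))
qed

lemma fC_mexp_rot_gen_even:
  assumes "a < b" "b < n" "c < d" "d < n" "(a,b) \<noteq> (c,d)"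
  shows "fC n w (mexp n (t \<cdot>\<^sub>m rot_gen n (a,b) + (- u) \<cdot>\<^sub>m rot_gen n (c,d)))
    = fC n w (mexp n (t \<cdot>\<^sub>m rot_gen n (a,b) + u \<cdot>\<^sub>m rot_gen n (c,d)))"
proof -
  obtain e where e: "e = c \<or> e = d" "e \<noteq> a" "e \<noteq> b"
    using assms(1,3,5) by (metis order.asym prod.inject)
  \<comment> \<open>Changing the sign of the \<open>e\<close>-th basis vector fixes \<open>rot_gen n (a,b)\<close>
    and negates \<open>rot_gen n (c,d)\<close>.\<close>
  define \<sigma> where "\<sigma> l = (if l = e then -1 else 1 :: real)" for l
  have \<sigma>: "\<sigma> l * \<sigma> l = 1" for l
    by (simp add: \<sigma>_def)
  let ?X = "\<lambda>u. t \<cdot>\<^sub>m rot_gen n (a,b) + u \<cdot>\<^sub>m rot_gen n (c,d)"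
  have "?X (- u) = mat_diag n \<sigma> * ?X u * mat_diag n \<sigma>"
  proof (rule eq_matI)
    fix i j assume "i < dim_row (mat_diag n \<sigma> * ?X u * mat_diag n \<sigma>)"
      "j < dim_col (mat_diag n \<sigma> * ?X u * mat_diag n \<sigma>)"
    then have "i < n" "j < n" by auto
    then show "?X (- u) $$ (i,j) = (mat_diag n \<sigma> * ?X u * mat_diag n \<sigma>) $$ (i,j)"
      using e assms by (subst index_mat_diag_conj) (auto simp: rot_gen_def \<sigma>_def)
  qed auto
  moreover have "?X u \<in> carrier_mat n n"
    by simp
  ultimately show ?thesis
    unfolding fC_def using mexp_mat_diag_conj_diag[OF _ \<sigma>] by simp
qed

lemma hessian_offdiag_fC_mexp_skew:
  assumes p: "p < dimSO n" and q: "q < dimSO n" and "p \<noteq> q"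
  shows "partial p (partial q (\<lambda>x. fC n w (mexp n (skew_of n x)))) (\<lambda>_. 0) = 0"
proof -
  obtain a b where ab: "coord_pairs n ! p = (a,b)" by fastforce
  obtain c d where cd: "coord_pairs n ! q = (c,d)" by fastforce
  have "a < b" "b < n" "c < d" "d < n"
    using coord_pairs_nth[OF p ab] coord_pairs_nth[OF q cd] by auto
  moreover have "(a,b) \<noteq> (c,d)"
    using nth_eq_iff_index_eq[OF distinct_coord_pairs, of p n q] assms ab cd
    by (simp add: dimSO_def)
  ultimately have even: "fC n w (mexp n (t \<cdot>\<^sub>m rot_gen n (a,b) + (- u) \<cdot>\<^sub>m rot_gen n (c,d)))
      = fC n w (mexp n (t \<cdot>\<^sub>m rot_gen n (a,b) + u \<cdot>\<^sub>m rot_gen n (c,d)))" for t u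
    by (rule fC_mexp_rot_gen_even)
  define h where "h = (\<lambda>x. fC n w (mexp n (skew_of n x)))"
  have "partial q h ((\<lambda>_. 0)(p := t)) = 0" for t
  proof (rule partial_eq_0_if_even)
    show "(\<lambda>u. h (((\<lambda>_. 0)(p := t))(q := ((\<lambda>_. 0)(p := t)) q + u))) differentiable (at 0)"
      using fC_mexp_line_differentiable[of "t \<cdot>\<^sub>m rot_gen n (a,b)" n "rot_gen n (c,d)" w]
      by (simp add: h_def skew_of_two_coords p q \<open>p \<noteq> q\<close> not_sym[OF \<open>p \<noteq> q\<close>] ab cd)
    show "h (((\<lambda>_. 0)(p := t))(q := ((\<lambda>_. 0)(p := t)) q + - u))
        = h (((\<lambda>_. 0)(p := t))(q := ((\<lambda>_. 0)(p := t)) q + u))" for u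
      using even[of t u]
      by (simp add: h_def skew_of_two_coords p q \<open>p \<noteq> q\<close> not_sym[OF \<open>p \<noteq> q\<close>] ab cd)
  qed
  then show ?thesis
    unfolding h_def[symmetric] by (intro partial_eqI) simp
qed

lemma hessian_fC_mexp_skew:
  "hessian (dimSO n) (\<lambda>x. fC n w (mexp n (skew_of n x))) (\<lambda>_. 0) =
     mat_diag (dimSO n) (\<lambda>p. case coord_pairs n ! p of (a,b) \<Rightarrow> - (w a + w b))"
  (is "?H = ?D")
proof (rule eq_matI)
  fix p q assume "p < dim_row ?D" "q < dim_col ?D"
  then have "p < dimSO n" "q < dimSO n" by auto
  then show "?H $$ (p,q) = ?D $$ (p,q)"
    by (cases "p = q")
      (auto simp: hessian_def mat_diag_def hessian_diag_fC_mexp_skew hessian_offdiag_fC_mexp_skew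
        split: prod.split)
qed (simp_all add: hessian_def)

section \<open>Counting negative eigenvalues\<close>

lemma order_prod_list_linear: "order a (\<Prod>x\<leftarrow>xs. [:-x, 1:]) = count_list xs (a :: real)"
proof (induction xs)
  case Nil
  show ?case by (simp add: order_0I)
next
  case (Cons x xs)
  have "(\<Prod>x\<leftarrow>xs. [:-x, 1:]) \<noteq> (0 :: real poly)"
    by (auto simp: prod_list_zero_iff)
  then have "order a (\<Prod>x\<leftarrow>x # xs. [:-x, 1:]) = order a [:-x, 1:] + order a (\<Prod>x\<leftarrow>xs. [:-x, 1:])"
    unfolding list.map prod_list.Cons by (intro order_mult no_zero_divisors) simp_all
  also have "order a [:-x, 1:] = of_bool (x = a)"
    using order_power_n_n[of a 1] by (auto intro!: order_0I)
  finally show ?case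
    using Cons by simp
qed

lemma count_list_filter: "P a \<Longrightarrow> count_list (filter P xs) a = count_list xs a"
  by (induction xs) auto

lemma num_neg_eigenvalues_upper_triangular:
  assumes "A \<in> carrier_mat n n" "upper_triangular A"
  shows "num_neg_eigenvalues A = length (filter (\<lambda>x. x < 0) (diag_mat A))"
proof -
  let ?xs = "diag_mat A"
  have cp: "char_poly A = (\<Prod>x\<leftarrow>?xs. [:-x, 1:])"
    using char_poly_upper_triangular[OF assms] .
  have roots: "{a. a < 0 \<and> poly (char_poly A) a = 0} = {a \<in> set ?xs. a < 0}"
    unfolding cp poly_prod_list by (auto simp: prod_list_zero_iff)
  have "num_neg_eigenvalues A = (\<Sum>a\<in>{a \<in> set ?xs. a < 0}. count_list ?xs a)"
    unfolding num_neg_eigenvalues_def roots unfolding cp order_prod_list_linear ..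
  also have "\<dots> = (\<Sum>a\<in>{a \<in> set ?xs. a < 0}. count_list (filter (\<lambda>x. x < 0) ?xs) a)"
    by (intro sum.cong refl) (simp add: count_list_filter)
  also have "\<dots> = length (filter (\<lambda>x. x < 0) ?xs)"
    by (rule sum_count_set) auto
  finally show ?thesis .
qed

lemma num_neg_eigenvalues_mat_diag:
  "num_neg_eigenvalues (mat_diag n d) = length (filter (\<lambda>x. x < 0) (map d [0..<n]))"
proof -
  have "upper_triangular (mat_diag n d)"
    by (auto simp: upper_triangular_def mat_diag_def)
  moreover have "diag_mat (mat_diag n d) = map d [0..<n]"
    by (simp add: diag_mat_def mat_diag_def)
  ultimately show ?thesis
    using num_neg_eigenvalues_upper_triangular[OF mat_diag_dim] by simp
qed

lemma num_neg_eigenvalues_hessian_fC_mexp_skew: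
  "num_neg_eigenvalues (hessian (dimSO n) (\<lambda>x. fC n w (mexp n (skew_of n x))) (\<lambda>_. 0))
     = length (filter (\<lambda>(a,b). 0 < w a + w b) (coord_pairs n))"
proof -
  let ?d = "\<lambda>(a,b). - (w a + w b)"
  have diag: "map (\<lambda>p. ?d (coord_pairs n ! p)) [0..<dimSO n] = map ?d (coord_pairs n)"
    unfolding dimSO_def by (rule nth_equalityI) auto
  have "length (filter (\<lambda>x. x < 0) (map ?d xs)) = length (filter (\<lambda>(a,b). 0 < w a + w b) xs)" for xs
    by (induction xs) auto
  then show ?thesis
    unfolding hessian_fC_mexp_skew num_neg_eigenvalues_mat_diag diag .
qed

lemma sum_if_eq_sum_filter_lessThan:
  fixes n :: nat
  shows "(\<Sum>i<n. if P i then f i else 0) = (\<Sum>i\<in>{i. i < n \<and> P i}. f i)"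
proof -
  have "(\<Sum>i<n. if P i then f i else 0) = (\<Sum>i\<in>{i \<in> {..<n}. P i}. f i)"
    by (rule sum.inter_filter[symmetric]) simp
  also have "{i \<in> {..<n}. P i} = {i. i < n \<and> P i}"
    by auto
  finally show ?thesis .
qed

lemma length_filter_coord_pairs_sign:
  fixes c \<epsilon> :: "nat \<Rightarrow> real"
  assumes c: "\<And>i j. i < j \<Longrightarrow> j < n \<Longrightarrow> \<bar>c i\<bar> < c j"
    and \<epsilon>: "\<And>i. i < n \<Longrightarrow> \<epsilon> i = 1 \<or> \<epsilon> i = -1"
  shows "length (filter (\<lambda>(a,b). 0 < c a * \<epsilon> a + c b * \<epsilon> b) (coord_pairs n))
    = (\<Sum>i\<in>{i. i < n \<and> \<epsilon> i = 1}. i)"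
proof -
  have pos: "0 < c i * \<epsilon> i + c j * \<epsilon> j \<longleftrightarrow> \<epsilon> j = 1" if "i < j" "j < n" for i j
  proof -
    have "\<bar>c i * \<epsilon> i\<bar> < c j"
      using c[OF that] \<epsilon>[of i] that by (auto simp: abs_mult)
    then show ?thesis
      using \<epsilon>[OF that(2)] by (auto simp: abs_less_iff)
  qed
  have row: "length (filter (\<lambda>i. 0 < c i * \<epsilon> i + c j * \<epsilon> j) [0..<j]) = (if \<epsilon> j = 1 then j else 0)"
    if "j < n" for j
  proof (cases "\<epsilon> j = 1")
    case True
    then have "filter (\<lambda>i. 0 < c i * \<epsilon> i + c j * \<epsilon> j) [0..<j] = [0..<j]"
      using pos[OF _ that] by (intro filter_True) simp
    then show ?thesis using True by simp
  next
    case False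
    then have "filter (\<lambda>i. 0 < c i * \<epsilon> i + c j * \<epsilon> j) [0..<j] = []"
      using pos[OF _ that] by (intro filter_False) simp
    then show ?thesis using False by simp
  qed
  have "length (filter (\<lambda>(a,b). 0 < c a * \<epsilon> a + c b * \<epsilon> b) (coord_pairs n))
      = (\<Sum>j<n. if \<epsilon> j = 1 then j else 0)"
    unfolding length_filter_coord_pairs by (intro sum.cong refl) (simp add: row)
  then show ?thesis
    by (simp add: sum_if_eq_sum_filter_lessThan)
qed

lemma sum_mult_sign:
  fixes c \<epsilon> :: "nat \<Rightarrow> real"
  assumes "\<And>i. i < n \<Longrightarrow> \<epsilon> i = 1 \<or> \<epsilon> i = -1"
  shows "(\<Sum>i<n. c i * \<epsilon> i) = 2 * (\<Sum>i\<in>{i. i < n \<and> \<epsilon> i = 1}. c i) - (\<Sum>i<n. c i)"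
proof -
  have "(\<Sum>i<n. c i * \<epsilon> i) = (\<Sum>i<n. 2 * (if \<epsilon> i = 1 then c i else 0) - c i)"
  proof (rule sum.cong)
    fix i assume "i \<in> {..<n}"
    then show "c i * \<epsilon> i = 2 * (if \<epsilon> i = 1 then c i else 0) - c i"
      using assms[of i] by auto
  qed simp
  also have "\<dots> = 2 * (\<Sum>i<n. if \<epsilon> i = 1 then c i else 0) - (\<Sum>i<n. c i)"
    by (simp only: sum_subtractf sum_distrib_left)
  finally show ?thesis
    by (simp only: sum_if_eq_sum_filter_lessThan)
qed

theorem mainTheorem3:
  fixes n :: nat and c :: "nat \<Rightarrow> real" and \<epsilon> :: "nat \<Rightarrow> real" and A :: "real mat"
  assumes "n \<ge> 2"
    and "0 \<le> c 0"
    and "\<And>i j. i < j \<Longrightarrow> j < n \<Longrightarrow> c i < c j"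
    and "\<And>i. i < n \<Longrightarrow> \<epsilon> i = 1 \<or> \<epsilon> i = -1"
    and "A = mat n n (\<lambda>(i,j). if i = j then \<epsilon> i else 0)"
    and "A \<in> SO n"
  shows "morse_index n c A = (\<Sum>i\<in>{i. i < n \<and> \<epsilon> i = 1}. i)
    \<and> fC n c A = 2 * (\<Sum>i\<in>{i. i < n \<and> \<epsilon> i = 1}. c i) - (\<Sum>i<n. c i)"
proof
  have A: "A = mat_diag n \<epsilon>"
    unfolding assms(5) mat_diag_def by (intro eq_matI) auto
  have c: "\<bar>c i\<bar> < c j" if "i < j" "j < n" for i j
  proof -
    have "0 \<le> c i"
      using assms(2) assms(3)[of 0 i] that by (cases "i = 0") auto
    then show ?thesis
      using assms(3)[OF that] by simp
  qed
  have "(\<lambda>x. fC n c (chart n A x)) = (\<lambda>x. fC n (\<lambda>i. c i * \<epsilon> i) (mexp n (skew_of n x)))"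
    unfolding chart_def A by (simp add: fC_mat_diag_mult mexp_def)
  then have "morse_index n c A
      = length (filter (\<lambda>(a,b). 0 < c a * \<epsilon> a + c b * \<epsilon> b) (coord_pairs n))"
    by (simp add: morse_index_def num_neg_eigenvalues_hessian_fC_mexp_skew)
  also have "\<dots> = (\<Sum>i\<in>{i. i < n \<and> \<epsilon> i = 1}. i)"
    using c assms(4) by (rule length_filter_coord_pairs_sign)
  finally show "morse_index n c A = (\<Sum>i\<in>{i. i < n \<and> \<epsilon> i = 1}. i)" .
  have "fC n c A = (\<Sum>i<n. c i * \<epsilon> i)"
    unfolding fC_def A by (simp add: mat_diag_def)
  then show "fC n c A = 2 * (\<Sum>i\<in>{i. i < n \<and> \<epsilon> i = 1}. c i) - (\<Sum>i<n. c i)"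
    using sum_mult_sign[OF assms(4)] by simp
qed

end
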